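(* Let $a,b\in\mathbb{Z}_{<0}$. Expand $q^{\frac12b}E_{(a,b)}X_1-E_{(a+1,b)}$ as a $\mathbb{Z}[q^{\pm\frac12}]$-linear combination of standard monomials. Then every standard monomial $E_{(c,d)}$ occurring with nonzero coefficient satisfies $c\le a-b+1$ if $d\ge0$, and $c-d\le a-b+1$ if $d<0$.
   Context: Let $\mathcal{T}$ be the quantum torus over $\mathbb{Z}[q^{\pm\frac12}]$ generated by $X_1^{\pm1},X_2^{\pm1}$ with $X_1X_2=qX_2X_1$, with skew field of fractions $\mathcal{F}$. Define $X_k\in\mathcal{F}$ ($k\in\mathbb{Z}$) by $X_{k-1}X_{k+1}=q^{\frac12}X_k+1$ for $k$ odd and $X_{k-1}X_{k+1}=q^2X_k^4+1$ for $k$ even; $\mathcal{A}_q(1,4)$ is the $\mathbb{Z}[q^{\pm\frac12}]$-subalgebra of $\mathcal{F}$ generated by all $X_k$. For $x\in\mathbb{Z}$, $[x]_+=\max(x,0)$. Standard monomials: $E_{(a,b)}=q^{-\frac12ab}X_3^{[-a]_+}X_1^{[a]_+}X_2^{[b]_+}X_0^{[-b]_+}$ for $(a,b)\in\mathbb{Z}^2$; they form a $\mathbb{Z}[q^{\pm\frac12}]$-basis of $\mathcal{A}_q(1,4)$. *)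

theory Defs
  imports "HOL-Library.Poly_Mapping"
begin

text \<open>We write v = q^(1/2). The ring Z[v, v^-1] of Laurent polynomials is
  the group ring of (int,+) over int, i.e. finitely supported maps int => int
  with convolution; vp k is the monomial v^k, so q^(x/2) = vp x.\<close>

type_synonym laur = "int \<Rightarrow>\<^sub>0 int"

definition vp :: "int \<Rightarrow> laur" where
  "vp k = Poly_Mapping.single k 1"

text \<open>Elements of the quantum torus are finite Z[v^+-1]-linear combinations of
  the normally ordered monomials M(m,n) = X1^m X2^n (m, n integers), which form a
  basis.  From X1 X2 = q X2 X1 one gets X2^n X1^m' = q^(-n m') X1^m' X2^n, hence
  M(m,n) M(m',n') = q^(-n m') M(m+m', n+n') = v^(-2 n m') M(m+m',n+n').\<close>

datatype qt = QT (qcoeffs: "(int \<times> int) \<Rightarrow>\<^sub>0 laur")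

instantiation qt :: ab_group_add
begin
definition zero_qt :: qt where "zero_qt = QT 0"
definition plus_qt :: "qt \<Rightarrow> qt \<Rightarrow> qt" where "plus_qt x y = QT (qcoeffs x + qcoeffs y)"
definition minus_qt :: "qt \<Rightarrow> qt \<Rightarrow> qt" where "minus_qt x y = QT (qcoeffs x - qcoeffs y)"
definition uminus_qt :: "qt \<Rightarrow> qt" where "uminus_qt x = QT (- qcoeffs x)"
instance
  by standard (auto simp: zero_qt_def plus_qt_def minus_qt_def uminus_qt_def add.assoc add.commute)
end

instantiation qt :: "{one, times}"
begin
definition one_qt :: qt where "one_qt = QT (Poly_Mapping.single (0,0) 1)"
definition times_qt :: "qt \<Rightarrow> qt \<Rightarrow> qt" where
  "times_qt x y = QT (\<Sum>\<alpha>\<in>Poly_Mapping.keys (qcoeffs x). \<Sum>\<beta>\<in>Poly_Mapping.keys (qcoeffs y).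
     Poly_Mapping.single (fst \<alpha> + fst \<beta>, snd \<alpha> + snd \<beta>)
       (Poly_Mapping.lookup (qcoeffs x) \<alpha> * Poly_Mapping.lookup (qcoeffs y) \<beta> * vp (-2 * snd \<alpha> * fst \<beta>)))"
instance ..
end

primrec qpow :: "qt \<Rightarrow> nat \<Rightarrow> qt" where
  "qpow x 0 = 1"
| "qpow x (Suc n) = x * qpow x n"

definition qsc :: "laur \<Rightarrow> qt" where
  "qsc c = QT (Poly_Mapping.single (0,0) c)"

definition qmon :: "int \<Rightarrow> int \<Rightarrow> qt" where
  "qmon m n = QT (Poly_Mapping.single (m,n) 1)"

definition X1 :: qt where "X1 = qmon 1 0"
definition X2 :: qt where "X2 = qmon 0 1"

definition pos :: "int \<Rightarrow> nat" where "pos x = nat x"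

definition stdmon :: "qt \<Rightarrow> qt \<Rightarrow> int \<times> int \<Rightarrow> qt" where
  "stdmon X0 X3 p = qsc (vp (- fst p * snd p)) *
     (qpow X3 (pos (- fst p)) * qpow X1 (pos (fst p)) * qpow X2 (pos (snd p)) * qpow X0 (pos (- snd p)))"

end

theory Submission
  imports Defs
begin

text \<open>Order the exponents (m, n) of X1^m X2^n lexicographically, first by m and then by -n.
  Each of X0 = (1 + q^(1/2) X1) X2^-1 and X3 = X1^-1 (1 + q^2 X2^4) has a leading term with a
  unit coefficient, namely at (1, -1) and (-1, 0), so E(e, d) has its leading term at
  (e + [-d]_+, d), again with a unit coefficient. These leading terms are pairwise distinct,
  so a key (e, d) of c maximising e + [-d]_+ (and then minimising d) contributes a nonzero
  coefficient that no other summand cancels. On the other side of the equation every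
  X1-exponent is at most a - b + 1, which bounds e + [-d]_+ for all keys of c.\<close>

definition qcoeff :: "qt \<Rightarrow> int \<times> int \<Rightarrow> laur" where
  "qcoeff u = Poly_Mapping.lookup (qcoeffs u)"

lemma vp_add: "vp (k + l) = vp k * vp l"
  by (simp add: vp_def mult_single)

lemma vp_0: "vp 0 = 1"
  by (simp add: vp_def)

lemma vp_nonzero: "vp k \<noteq> 0"
  by (simp add: vp_def)

lemma qcoeff_eq_0_if_not_key: "\<gamma> \<notin> Poly_Mapping.keys (qcoeffs u) \<Longrightarrow> qcoeff u \<gamma> = 0"
  by (simp add: qcoeff_def in_keys_iff)

lemma qcoeff_plus: "qcoeff (x + y) \<gamma> = qcoeff x \<gamma> + qcoeff y \<gamma>"
  by (simp add: qcoeff_def plus_qt_def lookup_add)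

lemma qcoeff_minus: "qcoeff (x - y) \<gamma> = qcoeff x \<gamma> - qcoeff y \<gamma>"
  by (simp add: qcoeff_def minus_qt_def lookup_minus)

lemma qcoeff_zero: "qcoeff 0 \<gamma> = 0"
  by (simp add: qcoeff_def zero_qt_def)

lemma qcoeff_one: "qcoeff 1 \<gamma> = (if \<gamma> = (0, 0) then 1 else 0)"
  by (simp add: qcoeff_def one_qt_def lookup_single when_def)

lemma qcoeff_qmon: "qcoeff (qmon m n) \<gamma> = (if \<gamma> = (m, n) then 1 else 0)"
  by (simp add: qcoeff_def qmon_def lookup_single when_def)

lemma qcoeff_qsc: "qcoeff (qsc c) \<gamma> = (if \<gamma> = (0, 0) then c else 0)"
  by (simp add: qcoeff_def qsc_def lookup_single when_def)

lemma qcoeff_sum: "qcoeff (\<Sum>p\<in>A. f p) \<gamma> = (\<Sum>p\<in>A. qcoeff (f p) \<gamma>)"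
  by (induction A rule: infinite_finite_induct) (simp_all add: qcoeff_zero qcoeff_plus)

lemma qcoeff_times:
  "qcoeff (x * y) \<gamma> = (\<Sum>\<alpha>\<in>Poly_Mapping.keys (qcoeffs x). \<Sum>\<beta>\<in>Poly_Mapping.keys (qcoeffs y).
     if (fst \<alpha> + fst \<beta>, snd \<alpha> + snd \<beta>) = \<gamma>
     then qcoeff x \<alpha> * qcoeff y \<beta> * vp (- 2 * snd \<alpha> * fst \<beta>) else 0)"
  unfolding qcoeff_def times_qt_def
  by (auto simp add: lookup_sum lookup_single when_def intro!: sum.cong)

lemma qcoeff_times_nonzeroE:
  assumes "qcoeff (x * y) (m, n) \<noteq> 0"
  obtains \<alpha> \<beta> where "qcoeff x \<alpha> \<noteq> 0" "qcoeff y \<beta> \<noteq> 0"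
    "fst \<alpha> + fst \<beta> = m" "snd \<alpha> + snd \<beta> = n"
proof -
  from assms obtain \<alpha> where "\<alpha> \<in> Poly_Mapping.keys (qcoeffs x)" and
    "(\<Sum>\<beta>\<in>Poly_Mapping.keys (qcoeffs y). if (fst \<alpha> + fst \<beta>, snd \<alpha> + snd \<beta>) = (m, n)
       then qcoeff x \<alpha> * qcoeff y \<beta> * vp (- 2 * snd \<alpha> * fst \<beta>) else 0) \<noteq> 0"
    unfolding qcoeff_times by (rule sum.not_neutral_contains_not_neutral)
  moreover from this(2) obtain \<beta> where "\<beta> \<in> Poly_Mapping.keys (qcoeffs y)"
    "(if (fst \<alpha> + fst \<beta>, snd \<alpha> + snd \<beta>) = (m, n)
       then qcoeff x \<alpha> * qcoeff y \<beta> * vp (- 2 * snd \<alpha> * fst \<beta>) else 0) \<noteq> 0"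
    by (rule sum.not_neutral_contains_not_neutral)
  ultimately show thesis
    using that by (auto simp: qcoeff_def in_keys_iff split: if_splits)
qed

lemma qcoeff_times_single_pair:
  assumes unique: "\<And>\<alpha> \<beta>. qcoeff x \<alpha> \<noteq> 0 \<Longrightarrow> qcoeff y \<beta> \<noteq> 0 \<Longrightarrow>
      (fst \<alpha> + fst \<beta>, snd \<alpha> + snd \<beta>) = \<gamma> \<Longrightarrow> \<alpha> = \<alpha>0 \<and> \<beta> = \<beta>0"
    and sum_eq: "(fst \<alpha>0 + fst \<beta>0, snd \<alpha>0 + snd \<beta>0) = \<gamma>"
  shows "qcoeff (x * y) \<gamma> = qcoeff x \<alpha>0 * qcoeff y \<beta>0 * vp (- 2 * snd \<alpha>0 * fst \<beta>0)"
proof -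
  define t where "t \<alpha> \<beta> = qcoeff x \<alpha> * qcoeff y \<beta> * vp (- 2 * snd \<alpha> * fst \<beta>)" for \<alpha> \<beta>
  have "qcoeff (x * y) \<gamma> = (\<Sum>\<alpha>\<in>Poly_Mapping.keys (qcoeffs x).
      if \<alpha> = \<alpha>0 then \<Sum>\<beta>\<in>Poly_Mapping.keys (qcoeffs y). if \<beta> = \<beta>0 then t \<alpha> \<beta> else 0 else 0)"
    unfolding qcoeff_times t_def[symmetric]
  proof (intro sum.cong refl)
    fix \<alpha>
    assume \<alpha>: "\<alpha> \<in> Poly_Mapping.keys (qcoeffs x)"
    have "(\<Sum>\<beta>\<in>Poly_Mapping.keys (qcoeffs y).
        if (fst \<alpha> + fst \<beta>, snd \<alpha> + snd \<beta>) = \<gamma> then t \<alpha> \<beta> else 0) =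
      (\<Sum>\<beta>\<in>Poly_Mapping.keys (qcoeffs y). if \<alpha> = \<alpha>0 \<and> \<beta> = \<beta>0 then t \<alpha> \<beta> else 0)"
    proof (intro sum.cong refl)
      fix \<beta>
      assume "\<beta> \<in> Poly_Mapping.keys (qcoeffs y)"
      with \<alpha> have "qcoeff x \<alpha> \<noteq> 0" "qcoeff y \<beta> \<noteq> 0"
        by (simp_all add: qcoeff_def in_keys_iff)
      with unique sum_eq have "(fst \<alpha> + fst \<beta>, snd \<alpha> + snd \<beta>) = \<gamma> \<longleftrightarrow> \<alpha> = \<alpha>0 \<and> \<beta> = \<beta>0"
        by blast
      then show "(if (fst \<alpha> + fst \<beta>, snd \<alpha> + snd \<beta>) = \<gamma> then t \<alpha> \<beta> else 0) =
          (if \<alpha> = \<alpha>0 \<and> \<beta> = \<beta>0 then t \<alpha> \<beta> else 0)"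
        by simp
    qed
    then show "(\<Sum>\<beta>\<in>Poly_Mapping.keys (qcoeffs y).
        if (fst \<alpha> + fst \<beta>, snd \<alpha> + snd \<beta>) = \<gamma> then t \<alpha> \<beta> else 0) =
      (if \<alpha> = \<alpha>0 then \<Sum>\<beta>\<in>Poly_Mapping.keys (qcoeffs y). if \<beta> = \<beta>0 then t \<alpha> \<beta> else 0 else 0)"
      by (cases "\<alpha> = \<alpha>0") simp_all
  qed
  also have "\<dots> = t \<alpha>0 \<beta>0"
    by (simp add: t_def qcoeff_eq_0_if_not_key)
  finally show ?thesis
    by (simp add: t_def)
qed

lemma qcoeff_qsc_times: "qcoeff (qsc c * u) \<gamma> = c * qcoeff u \<gamma>"
  by (subst qcoeff_times_single_pair[of _ _ _ "(0, 0)" \<gamma>])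
     (auto simp: qcoeff_qsc vp_0 prod_eq_iff split: if_splits)

lemma qcoeff_times_qmon_right:
  "qcoeff (x * qmon m n) (fst \<alpha> + m, snd \<alpha> + n) = qcoeff x \<alpha> * vp (- 2 * snd \<alpha> * m)"
  by (subst qcoeff_times_single_pair[of _ _ _ \<alpha> "(m, n)"])
     (auto simp: qcoeff_qmon prod_eq_iff split: if_splits)

lemma qcoeff_qmon_times_left:
  "qcoeff (qmon m n * y) (m + fst \<beta>, n + snd \<beta>) = vp (- 2 * n * fst \<beta>) * qcoeff y \<beta>"
  by (subst qcoeff_times_single_pair[of _ _ _ "(m, n)" \<beta>])
     (auto simp: qcoeff_qmon prod_eq_iff mult.commute split: if_splits)

definition leading_unit :: "qt \<Rightarrow> int \<Rightarrow> int \<Rightarrow> bool" where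
  "leading_unit u D d \<longleftrightarrow>
     (\<forall>m n. qcoeff u (m, n) \<noteq> 0 \<longrightarrow> m < D \<or> (m = D \<and> d \<le> n)) \<and> (\<exists>e. qcoeff u (D, d) = vp e)"

lemma leading_unitD:
  "leading_unit u D d \<Longrightarrow> qcoeff u (m, n) \<noteq> 0 \<Longrightarrow> m < D \<or> (m = D \<and> d \<le> n)"
  by (simp add: leading_unit_def)

lemma leading_unit_bound: "leading_unit u D d \<Longrightarrow> qcoeff u (m, n) \<noteq> 0 \<Longrightarrow> m \<le> D"
  by (auto dest: leading_unitD)

lemma leading_unit_times:
  assumes x: "leading_unit x D1 d1" and y: "leading_unit y D2 d2"
  shows "leading_unit (x * y) (D1 + D2) (d1 + d2)"
proof -
  obtain e1 e2 where e1: "qcoeff x (D1, d1) = vp e1" and e2: "qcoeff y (D2, d2) = vp e2"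
    using x y by (auto simp: leading_unit_def)
  have support: "m < D1 + D2 \<or> (m = D1 + D2 \<and> d1 + d2 \<le> n)" if "qcoeff (x * y) (m, n) \<noteq> 0" for m n
  proof -
    obtain \<alpha> \<beta> where "qcoeff x \<alpha> \<noteq> 0" "qcoeff y \<beta> \<noteq> 0"
      "fst \<alpha> + fst \<beta> = m" "snd \<alpha> + snd \<beta> = n"
      using \<open>qcoeff (x * y) (m, n) \<noteq> 0\<close> by (rule qcoeff_times_nonzeroE)
    with leading_unitD[OF x, of "fst \<alpha>" "snd \<alpha>"] leading_unitD[OF y, of "fst \<beta>" "snd \<beta>"]
    show ?thesis by auto
  qed
  have "qcoeff (x * y) (D1 + D2, d1 + d2) = vp e1 * vp e2 * vp (- 2 * d1 * D2)"
  proof (subst qcoeff_times_single_pair[of _ _ _ "(D1, d1)" "(D2, d2)"])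
    fix \<alpha> \<beta>
    assume "qcoeff x \<alpha> \<noteq> 0" "qcoeff y \<beta> \<noteq> 0"
      and "(fst \<alpha> + fst \<beta>, snd \<alpha> + snd \<beta>) = (D1 + D2, d1 + d2)"
    with leading_unitD[OF x, of "fst \<alpha>" "snd \<alpha>"] leading_unitD[OF y, of "fst \<beta>" "snd \<beta>"]
    show "\<alpha> = (D1, d1) \<and> \<beta> = (D2, d2)" by (auto simp: prod_eq_iff)
  qed (simp_all add: e1 e2)
  then have "qcoeff (x * y) (D1 + D2, d1 + d2) = vp (e1 + e2 + - 2 * d1 * D2)"
    by (simp only: vp_add)
  with support show ?thesis
    unfolding leading_unit_def by blast
qed

lemma leading_unit_one: "leading_unit 1 0 0"
  by (auto simp: leading_unit_def qcoeff_one vp_0 intro: exI[of _ 0])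

lemma leading_unit_qmon: "leading_unit (qmon m n) m n"
  by (auto simp: leading_unit_def qcoeff_qmon vp_0 intro: exI[of _ 0])

lemma leading_unit_qsc_vp: "leading_unit (qsc (vp k)) 0 0"
  by (auto simp: leading_unit_def qcoeff_qsc)

lemma leading_unit_qpow:
  "leading_unit x D d \<Longrightarrow> leading_unit (qpow x k) (int k * D) (int k * d)"
proof (induction k)
  case 0
  then show ?case by (simp add: leading_unit_one)
next
  case (Suc k)
  then have "leading_unit (x * qpow x k) (D + int k * D) (d + int k * d)"
    by (intro leading_unit_times)
  then show ?case by (simp add: algebra_simps)
qed

lemma leading_unit_X0:
  assumes exchange: "X0 * X2 = qsc (vp 1) * X1 + 1"
  shows "leading_unit X0 1 (- 1)"
proof -
  have coeff: "qcoeff X0 (m, n) =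
      (if (m, n + 1) = (1, 0) then vp 1 else 0) + (if (m, n + 1) = (0, 0) then 1 else 0)" for m n
  proof -
    have "qcoeff X0 (m, n) = qcoeff (X0 * X2) (m, n + 1)"
      using qcoeff_times_qmon_right[of X0 0 1 "(m, n)"] by (simp add: X2_def vp_0)
    also have "\<dots> = (if (m, n + 1) = (1, 0) then vp 1 else 0) + (if (m, n + 1) = (0, 0) then 1 else 0)"
      unfolding exchange by (simp add: qcoeff_plus qcoeff_qsc_times X1_def qcoeff_qmon qcoeff_one)
    finally show ?thesis .
  qed
  show ?thesis
    unfolding leading_unit_def coeff by auto
qed

lemma leading_unit_X3:
  assumes exchange: "X1 * X3 = qsc (vp 4) * qpow X2 4 + 1"
  shows "leading_unit X3 (- 1) 0"
proof -
  have X2_4: "leading_unit (qpow X2 4) 0 4"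
    using leading_unit_qpow[OF leading_unit_qmon[of 0 1], of 4] by (simp add: X2_def)
  have coeff: "qcoeff X3 (m, n) =
      vp 4 * qcoeff (qpow X2 4) (1 + m, n) + (if (1 + m, n) = (0, 0) then 1 else 0)" for m n
  proof -
    have "qcoeff X3 (m, n) = qcoeff (X1 * X3) (1 + m, n)"
      using qcoeff_qmon_times_left[of 1 0 X3 "(m, n)"] by (simp add: X1_def vp_0)
    also have "\<dots> = vp 4 * qcoeff (qpow X2 4) (1 + m, n) + (if (1 + m, n) = (0, 0) then 1 else 0)"
      unfolding exchange by (simp add: qcoeff_plus qcoeff_qsc_times qcoeff_one)
    finally show ?thesis .
  qed
  have X2_4_support: "qcoeff (qpow X2 4) (m, n) \<noteq> 0 \<Longrightarrow> m < 0 \<or> (m = 0 \<and> 4 \<le> n)" for m n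
    using leading_unitD[OF X2_4] by simp
  have "m < - 1 \<or> (m = - 1 \<and> 0 \<le> n)" if "qcoeff X3 (m, n) \<noteq> 0" for m n
    using that X2_4_support[of "1 + m" n] unfolding coeff by (auto split: if_splits)
  moreover have "qcoeff X3 (- 1, 0) = vp 0"
    using X2_4_support[of 0 0] unfolding coeff by (auto simp: vp_0)
  ultimately show ?thesis
    unfolding leading_unit_def by blast
qed

lemma leading_unit_stdmon:
  assumes "leading_unit X0 1 (- 1)" and "leading_unit X3 (- 1) 0"
  shows "leading_unit (stdmon X0 X3 (e, d)) (e + int (pos (- d))) d"
proof -
  have "leading_unit (stdmon X0 X3 (e, d))
      (0 + (int (pos (- e)) * (- 1) + int (pos e) * 1 + int (pos d) * 0 + int (pos (- d)) * 1))
      (0 + (int (pos (- e)) * 0 + int (pos e) * 0 + int (pos d) * 1 + int (pos (- d)) * (- 1)))"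
    unfolding stdmon_def fst_conv snd_conv
    by (intro leading_unit_times leading_unit_qsc_vp leading_unit_qpow assms
        leading_unit_qmon[of 1 0, folded X1_def] leading_unit_qmon[of 0 1, folded X2_def])
  moreover have "0 + (int (pos (- e)) * (- 1) + int (pos e) * 1 + int (pos d) * 0 + int (pos (- d)) * 1)
      = e + int (pos (- d))"
    by (simp add: pos_def)
  moreover have "0 + (int (pos (- e)) * 0 + int (pos e) * 0 + int (pos d) * 1 + int (pos (- d)) * (- 1)) = d"
    by (simp add: pos_def)
  ultimately show ?thesis
    by simp
qed

lemma leading_unit_combination_bound:
  fixes c :: "'a \<Rightarrow>\<^sub>0 laur"
  assumes lead: "\<And>p. leading_unit (u p) (D p) (d p)"
    and distinct: "\<And>p p'. D p = D p' \<Longrightarrow> d p = d p' \<Longrightarrow> p = p'"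
    and bound: "\<And>m n. qcoeff (\<Sum>p\<in>Poly_Mapping.keys c. qsc (Poly_Mapping.lookup c p) * u p) (m, n) \<noteq> 0
      \<Longrightarrow> m \<le> K"
    and p: "p \<in> Poly_Mapping.keys c"
  shows "D p \<le> K"
proof -
  define S where "S = Poly_Mapping.keys c"
  define M where "M = Max (D ` S)"
  define T where "T = {p \<in> S. D p = M}"
  define n0 where "n0 = Min (d ` T)"
  have "finite S" by (simp add: S_def)
  then have D_le_M: "D p' \<le> M" if "p' \<in> S" for p'
    using that by (simp add: M_def)
  have "M \<in> D ` S"
    unfolding M_def using \<open>finite S\<close> p by (intro Max_in) (auto simp: S_def)
  then have "T \<noteq> {}"
    by (auto simp: T_def)
  moreover have "finite T"
    using \<open>finite S\<close> by (simp add: T_def)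
  ultimately have "n0 \<in> d ` T"
    unfolding n0_def by (intro Min_in) auto
  then obtain p0 where "p0 \<in> T" and d_p0: "d p0 = n0"
    by blast
  then have p0: "p0 \<in> S" "D p0 = M"
    by (auto simp: T_def)
  have others: "qcoeff (u p') (M, n0) = 0" if "p' \<in> S" "p' \<noteq> p0" for p'
  proof (rule ccontr)
    assume "qcoeff (u p') (M, n0) \<noteq> 0"
    with leading_unitD[OF lead] D_le_M[OF \<open>p' \<in> S\<close>] have "D p' = M" "d p' \<le> n0"
      by fastforce+
    moreover have "n0 \<le> d p'"
      using \<open>finite S\<close> \<open>p' \<in> S\<close> \<open>D p' = M\<close> by (auto simp: n0_def T_def)
    ultimately show False
      using distinct[of p' p0] p0 d_p0 \<open>p' \<noteq> p0\<close> by simp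
  qed
  obtain e where e: "qcoeff (u p0) (M, n0) = vp e"
    using lead[of p0] p0 d_p0 by (auto simp: leading_unit_def)
  have "qcoeff (\<Sum>p\<in>S. qsc (Poly_Mapping.lookup c p) * u p) (M, n0)
      = (\<Sum>p\<in>S. Poly_Mapping.lookup c p * qcoeff (u p) (M, n0))"
    by (simp add: qcoeff_sum qcoeff_qsc_times)
  also have "\<dots> = Poly_Mapping.lookup c p0 * vp e"
    using \<open>finite S\<close> p0 others by (simp add: sum.remove e sum.neutral)
  finally have "qcoeff (\<Sum>p\<in>S. qsc (Poly_Mapping.lookup c p) * u p) (M, n0) \<noteq> 0"
    using p0 by (simp add: vp_nonzero S_def in_keys_iff)
  then have "M \<le> K"
    using bound by (simp add: S_def)
  with D_le_M p show ?thesis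
    by (fastforce simp: S_def)
qed

theorem lemma4p4:
  fixes a b :: int and X0 X3 :: qt and c :: "(int \<times> int) \<Rightarrow>\<^sub>0 laur"
  assumes "a < 0" and "b < 0"
    and "X0 * X2 = qsc (vp 1) * X1 + 1"
    and "X1 * X3 = qsc (vp 4) * qpow X2 4 + 1"
    and "qsc (vp b) * stdmon X0 X3 (a, b) * X1 - stdmon X0 X3 (a + 1, b)
           = (\<Sum>p\<in>Poly_Mapping.keys c. qsc (Poly_Mapping.lookup c p) * stdmon X0 X3 p)"
  shows "\<forall>(e, d)\<in>Poly_Mapping.keys c. (0 \<le> d \<longrightarrow> e \<le> a - b + 1) \<and> (d < 0 \<longrightarrow> e - d \<le> a - b + 1)"
proof -
  have lead: "leading_unit (stdmon X0 X3 p) (fst p + int (pos (- snd p))) (snd p)" for p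
    using leading_unit_stdmon[OF leading_unit_X0 leading_unit_X3] assms(3,4) by (cases p) auto
  have "int (pos (- b)) = - b"
    using \<open>b < 0\<close> by (simp add: pos_def)
  then have lhs1: "leading_unit (qsc (vp b) * stdmon X0 X3 (a, b) * X1) (a - b + 1) b"
    and lhs2: "leading_unit (stdmon X0 X3 (a + 1, b)) (a - b + 1) b"
    using leading_unit_times[OF leading_unit_times[OF leading_unit_qsc_vp lead[of "(a, b)"]]
        leading_unit_qmon[of 1 0, folded X1_def]] lead[of "(a + 1, b)"]
    by (simp_all add: algebra_simps)
  have "m \<le> a - b + 1"
    if "qcoeff (qsc (vp b) * stdmon X0 X3 (a, b) * X1 - stdmon X0 X3 (a + 1, b)) (m, n) \<noteq> 0" for m n
  proof -
    have "qcoeff (qsc (vp b) * stdmon X0 X3 (a, b) * X1) (m, n) \<noteq> 0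
        \<or> qcoeff (stdmon X0 X3 (a + 1, b)) (m, n) \<noteq> 0"
      using that by (auto simp: qcoeff_minus)
    then show ?thesis
      using leading_unit_bound[OF lhs1] leading_unit_bound[OF lhs2] by blast
  qed
  then have "fst p + int (pos (- snd p)) \<le> a - b + 1" if "p \<in> Poly_Mapping.keys c" for p
    using that by (intro leading_unit_combination_bound[OF lead]) (auto simp: assms(5) prod_eq_iff)
  then show ?thesis
    by (fastforce simp: pos_def)
qed

end
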